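(* Let $A\in\mathbb{R}^{n\times n}$ be an invertible M-matrix, partitioned as $A=\begin{bmatrix} A_{11} & A_{12}\\ A_{21} & A_{22}\end{bmatrix}$ with square diagonal blocks $A_{11}\in\mathbb{R}^{k\times k}$, $A_{22}\in\mathbb{R}^{(n-k)\times(n-k)}$. Let $M_{11},N_{11}\in\mathbb{R}^{k\times k}$, $M_{22},N_{22}\in\mathbb{R}^{(n-k)\times(n-k)}$, $M_{21},N_{21}\in\mathbb{R}^{(n-k)\times k}$, and suppose that both pairs \[ M' = \begin{bmatrix} M_{11} & 0\\ M_{21} & M_{22}\end{bmatrix},\quad N' = \begin{bmatrix} N_{11} & -A_{12}\\ N_{21} & N_{22}\end{bmatrix} \qquad\text{and}\qquad \hat{M} = \begin{bmatrix} M_{11} & A_{12}\\ 0 & M_{22}\end{bmatrix},\quad \hat{N} = \begin{bmatrix} N_{11} & 0\\ -A_{21} & N_{22}\end{bmatrix} \] are regular splittings of $A$. Then $\rho(\hat{M}^{-1}\hat{N}) \leq \rho((M')^{-1}N')$.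
   Context: A regular splitting of $A$ is a pair $(M,N)$ with $M$ an invertible M-matrix, $N\geq 0$ entrywise, and $A=M-N$. $\rho(\cdot)$ denotes the spectral radius. *)

theory Defs
  imports "Jordan_Normal_Form.Spectral_Radius" "Jordan_Normal_Form.Gauss_Jordan_Elimination"
begin

definition nonneg_mat :: "real mat \<Rightarrow> bool" where
  "nonneg_mat B \<longleftrightarrow> (\<forall>i < dim_row B. \<forall>j < dim_col B. B $$ (i, j) \<ge> 0)"

definition rho :: "real mat \<Rightarrow> real" where
  "rho A = spectral_radius (map_mat complex_of_real A)"

definition M_matrix :: "nat \<Rightarrow> real mat \<Rightarrow> bool" where
  "M_matrix n A \<longleftrightarrow> A \<in> carrier_mat n n \<and>
     (\<exists>s B. B \<in> carrier_mat n n \<and> nonneg_mat B \<and> s \<ge> rho B \<and> A = s \<cdot>\<^sub>m 1\<^sub>m n - B)"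

definition inv_M_matrix :: "nat \<Rightarrow> real mat \<Rightarrow> bool" where
  "inv_M_matrix n A \<longleftrightarrow> M_matrix n A \<and> invertible_mat A"

definition regular_splitting :: "nat \<Rightarrow> real mat \<Rightarrow> real mat \<Rightarrow> real mat \<Rightarrow> bool" where
  "regular_splitting n A M N \<longleftrightarrow> inv_M_matrix n M \<and> N \<in> carrier_mat n n \<and> nonneg_mat N
     \<and> A = M - N"

text \<open>Matrix inverse (meaningful for invertible square matrices).\<close>
definition minv :: "real mat \<Rightarrow> real mat" where
  "minv A = the (mat_inverse A)"

end

theory Submission
  imports Defs
begin

text \<open>
  Let \<open>(M, N)\<close> be the splitting with \<open>M\<close> block upper triangular and \<open>(M', N')\<close> the one with
  \<open>M'\<close> block lower triangular. Both iteration matrices \<open>T = M\<^sup>-\<^sup>1N\<close> and \<open>T' = M'\<^sup>-\<^sup>1N'\<close> are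
  nonnegative, and \<open>\<rho>(T') < 1\<close> because \<open>A\<^sup>-\<^sup>1 \<ge> 0\<close>. For \<open>\<rho>(T') < \<mu> < 1\<close> the matrix
  \<open>\<mu>M' - N' = M'(\<mu>I - T')\<close> has a nonnegative inverse, so \<open>(\<mu>M' - N')x = e\<close> (all ones) for some
  \<open>x \<ge> 0\<close>. With \<open>D = diag(I, \<mu>\<^sup>-\<^sup>1I)\<close> one has \<open>D(\<mu>M' - N') \<le> (\<mu>M - N)D\<close> entrywise, so
  \<open>z = Dx \<ge> 0\<close> satisfies \<open>(\<mu>M - N)z \<ge> De > 0\<close>; multiplying by \<open>M\<^sup>-\<^sup>1 \<ge> 0\<close> gives \<open>Tz < \<mu>z\<close>,
  hence \<open>\<rho>(T) < \<mu>\<close> by the Collatz--Wielandt bound. Inverses of nonsingular M-matrices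
  \<open>sI - B\<close> are nonnegative by the Neumann series if \<open>s > \<rho>(B)\<close>, and by letting \<open>s + \<epsilon>\<close> tend
  to \<open>s\<close> if \<open>s = \<rho>(B)\<close>.
\<close>

lemma index_mult_mat_vec_sum:
  assumes "A \<in> carrier_mat n m" "v \<in> carrier_vec m" "i < n"
  shows "(A *\<^sub>v v) $ i = (\<Sum>j<m. A $$ (i, j) * v $ j)"
  using assms by (auto simp: scalar_prod_def lessThan_atLeast0 intro!: sum.cong)

lemma index_mult_mat_sum:
  assumes "A \<in> carrier_mat n m" "B \<in> carrier_mat m p" "i < n" "j < p"
  shows "(A * B) $$ (i, j) = (\<Sum>l<m. A $$ (i, l) * B $$ (l, j))"
  using assms by (auto simp: scalar_prod_def lessThan_atLeast0 intro!: sum.cong)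

lemma smult_mat_mult_vec:
  fixes A :: "'a :: comm_ring_1 mat"
  assumes "A \<in> carrier_mat n m" "v \<in> carrier_vec m"
  shows "(c \<cdot>\<^sub>m A) *\<^sub>v v = c \<cdot>\<^sub>v (A *\<^sub>v v)"
  using assms by (intro eq_vecI) (auto simp: scalar_prod_def sum_distrib_left ac_simps intro!: sum.cong)

lemma inverse_mult_mat_vec_cancel:
  fixes A B :: "'a :: semiring_1 mat"
  assumes "B \<in> carrier_mat n n" "A \<in> carrier_mat n n" "B * A = 1\<^sub>m n" "v \<in> carrier_vec n"
  shows "B *\<^sub>v (A *\<^sub>v v) = v"
proof -
  have "B *\<^sub>v (A *\<^sub>v v) = (B * A) *\<^sub>v v"
    by (rule assoc_mult_mat_vec[OF assms(1,2,4), symmetric])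
  also have "\<dots> = v" using assms(3,4) by simp
  finally show ?thesis .
qed

lemma smult_pow_mat:
  fixes A :: "'a :: comm_ring_1 mat"
  assumes A: "A \<in> carrier_mat n n"
  shows "(c \<cdot>\<^sub>m A) ^\<^sub>m K = c ^ K \<cdot>\<^sub>m A ^\<^sub>m K"
proof (induction K)
  case 0
  show ?case by (rule eq_matI) (use A in auto)
next
  case (Suc K)
  have "(c \<cdot>\<^sub>m A) ^\<^sub>m Suc K = (c ^ K \<cdot>\<^sub>m A ^\<^sub>m K) * (c \<cdot>\<^sub>m A)"
    using Suc by simp
  also have "\<dots> = c ^ Suc K \<cdot>\<^sub>m A ^\<^sub>m Suc K"
    using A by (intro eq_matI) (simp_all add: mult_smult_assoc_mat[of _ n n] mult_smult_distrib[of _ n n])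
  finally show ?case .
qed

lemma eigenvalue_smult:
  fixes A :: "'a :: field mat"
  assumes A: "A \<in> carrier_mat n n" and ev: "eigenvalue A ev"
  shows "eigenvalue (c \<cdot>\<^sub>m A) (c * ev)"
  using ev A unfolding eigenvalue_def eigenvector_def
  by (auto simp: smult_mat_mult_vec[OF A] smult_smult_assoc)

section \<open>Nonnegative matrices\<close>

lemma nonneg_matD:
  "nonneg_mat B \<Longrightarrow> B \<in> carrier_mat n m \<Longrightarrow> i < n \<Longrightarrow> j < m \<Longrightarrow> 0 \<le> B $$ (i, j)"
  unfolding nonneg_mat_def by auto

lemma nonneg_mat_mult:
  assumes A: "A \<in> carrier_mat n m" and B: "B \<in> carrier_mat m p"
    and "nonneg_mat A" "nonneg_mat B"
  shows "nonneg_mat (A * B)"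
  unfolding nonneg_mat_def
proof (intro allI impI)
  fix i j assume "i < dim_row (A * B)" "j < dim_col (A * B)"
  with A B have ij: "i < n" "j < p" by auto
  show "0 \<le> (A * B) $$ (i, j)"
    unfolding index_mult_mat_sum[OF A B ij] using ij
    by (auto intro!: sum_nonneg mult_nonneg_nonneg nonneg_matD[OF assms(3) A] nonneg_matD[OF assms(4) B])
qed

lemma nonneg_mat_pow:
  assumes "A \<in> carrier_mat n n" "nonneg_mat A"
  shows "nonneg_mat (A ^\<^sub>m K)"
proof (induction K)
  case 0
  show ?case by (simp add: nonneg_mat_def)
next
  case (Suc K)
  then show ?case using nonneg_mat_mult[OF pow_carrier_mat[OF assms(1)] assms(1) Suc assms(2)] by simp
qed

lemma nonneg_mat_mult_vec:
  assumes A: "A \<in> carrier_mat n m" and "nonneg_mat A"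
    and v: "v \<in> carrier_vec m" "\<forall>j<m. 0 \<le> v $ j" and i: "i < n"
  shows "0 \<le> (A *\<^sub>v v) $ i"
  unfolding index_mult_mat_vec_sum[OF A v(1) i] using v(2) i
  by (auto intro!: sum_nonneg mult_nonneg_nonneg nonneg_matD[OF assms(2) A])

lemma nonneg_mat_right_inverse_mult_vec_pos:
  assumes A: "A \<in> carrier_mat n n" and B: "B \<in> carrier_mat n n"
    and nn: "nonneg_mat A" and AB: "A * B = 1\<^sub>m n"
    and w: "w \<in> carrier_vec n" "\<forall>j<n. 0 < w $ j" and i: "i < n"
  shows "0 < (A *\<^sub>v w) $ i"
proof -
  have "\<exists>l<n. A $$ (i, l) \<noteq> 0"
  proof (rule ccontr)
    assume "\<not> ?thesis"
    then have "(A * B) $$ (i, i) = 0"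
      using index_mult_mat_sum[OF A B i i] by simp
    with AB i show False by simp
  qed
  then obtain l where l: "l < n" "A $$ (i, l) \<noteq> 0" by blast
  have "0 < A $$ (i, l) * w $ l"
    using l w nonneg_matD[OF nn A i l(1)] by simp
  also have "\<dots> \<le> (\<Sum>j<n. A $$ (i, j) * w $ j)"
    using l w nonneg_matD[OF nn A i] by (intro member_le_sum) (auto intro: less_imp_le)
  also have "\<dots> = (A *\<^sub>v w) $ i"
    using index_mult_mat_vec_sum[OF A w(1) i] by simp
  finally show ?thesis .
qed

section \<open>Spectral radius\<close>

lemma rho_attained:
  assumes "B \<in> carrier_mat n n" "0 < n"
  obtains ev where "eigenvalue (map_mat complex_of_real B) ev" "rho B = norm ev"
proof -
  have "map_mat complex_of_real B \<in> carrier_mat n n" using assms(1) by simp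
  from spectral_radius_mem_max(1)[OF this assms(2)] that show thesis
    unfolding rho_def spectrum_def by auto
qed

lemma rho_nonneg: "B \<in> carrier_mat n n \<Longrightarrow> 0 < n \<Longrightarrow> 0 \<le> rho B"
  by (metis norm_ge_zero rho_attained)

lemma eigenvalue_norm_le_rho:
  assumes B: "B \<in> carrier_mat n n" and ev: "eigenvalue (map_mat complex_of_real B) ev"
  shows "norm ev \<le> rho B"
proof -
  have Bc: "map_mat complex_of_real B \<in> carrier_mat n n" using B by simp
  show ?thesis
    using spectral_radius_mem_max(2)[OF Bc eigenvalue_imp_nonzero_dim[OF Bc ev]] ev
    unfolding rho_def spectrum_def by auto
qed

lemma real_eigenvalue_abs_le_rho:
  assumes "B \<in> carrier_mat n n" "eigenvalue B t"
  shows "\<bar>t\<bar> \<le> rho B"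
  using eigenvalue_norm_le_rho[OF assms(1) of_real_hom.eigenvalue_hom[OF assms]] by simp

lemma rho_smult_le:
  assumes B: "B \<in> carrier_mat n n" and n: "0 < n" and a: "0 < a"
  shows "rho (a \<cdot>\<^sub>m B) \<le> a * rho B"
proof -
  have aB: "a \<cdot>\<^sub>m B \<in> carrier_mat n n" using B by simp
  obtain ev where ev: "eigenvalue (map_mat complex_of_real (a \<cdot>\<^sub>m B)) ev"
    and rho: "rho (a \<cdot>\<^sub>m B) = norm ev"
    using rho_attained[OF aB n] by blast
  have "map_mat complex_of_real B = complex_of_real (1 / a) \<cdot>\<^sub>m map_mat complex_of_real (a \<cdot>\<^sub>m B)"
    using a by (intro eq_matI) auto
  moreover have "map_mat complex_of_real (a \<cdot>\<^sub>m B) \<in> carrier_mat n n" using B by simp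
  ultimately have "eigenvalue (map_mat complex_of_real B) (complex_of_real (1 / a) * ev)"
    using eigenvalue_smult[OF _ ev] by metis
  then have "norm (complex_of_real (1 / a) * ev) \<le> rho B"
    by (rule eigenvalue_norm_le_rho[OF B])
  with a show ?thesis
    unfolding rho by (simp add: norm_divide field_simps)
qed

lemma rho_smult_inverse_less_1:
  assumes B: "B \<in> carrier_mat n n" and n: "0 < n" and t: "rho B < t"
  shows "rho ((1 / t) \<cdot>\<^sub>m B) < 1"
proof -
  have t0: "0 < t" using rho_nonneg[OF B n] t by linarith
  have "rho ((1 / t) \<cdot>\<^sub>m B) \<le> rho B / t" using rho_smult_le[OF B n, of "1 / t"] t0 by simp
  also have "\<dots> < 1" using t t0 by simp
  finally show ?thesis .
qed

lemma det_shift_nonzero_if_rho_less: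
  fixes B :: "real mat"
  assumes B: "B \<in> carrier_mat n n" and t: "rho B < t"
  shows "det (t \<cdot>\<^sub>m 1\<^sub>m n - B) \<noteq> 0"
proof
  assume "det (t \<cdot>\<^sub>m 1\<^sub>m n - B) = 0"
  moreover have "char_matrix B t = (- 1) \<cdot>\<^sub>m (t \<cdot>\<^sub>m 1\<^sub>m n - B)"
    unfolding char_matrix_def using B by (intro eq_matI) auto
  ultimately have "eigenvalue B t"
    using eigenvalue_det[OF B] B by (simp add: minus_carrier_mat)
  from real_eigenvalue_abs_le_rho[OF B this] t show False by linarith
qed

text \<open>Compare both sides of \<open>T v = \<lambda> v\<close> at an entry where \<open>|v\<^sub>i| / x\<^sub>i\<close> is maximal.\<close>

lemma eigenvalue_norm_le_ratio:
  fixes T :: "real mat"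
  assumes T: "T \<in> carrier_mat n n" and nn: "nonneg_mat T"
    and x: "x \<in> carrier_vec n" and pos: "\<forall>i<n. 0 < x $ i"
    and ev: "eigenvalue (map_mat complex_of_real T) ev"
  obtains i where "i < n" "norm ev * x $ i \<le> (T *\<^sub>v x) $ i"
proof -
  let ?Tc = "map_mat complex_of_real T"
  have Tc: "?Tc \<in> carrier_mat n n" using T by simp
  obtain v where v: "v \<in> carrier_vec n" "v \<noteq> 0\<^sub>v n" "?Tc *\<^sub>v v = ev \<cdot>\<^sub>v v"
    using ev T unfolding eigenvalue_def eigenvector_def by auto
  define f where "f i = norm (v $ i) / x $ i" for i
  define c where "c = Max (f ` {..<n})"
  have "\<exists>i<n. v $ i \<noteq> 0"
  proof (rule ccontr)
    assume "\<not> ?thesis"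
    then have "v = 0\<^sub>v n" using v(1) by (intro eq_vecI) auto
    with v(2) show False by simp
  qed
  then obtain i1 where i1: "i1 < n" "v $ i1 \<noteq> 0" by blast
  have fin: "finite (f ` {..<n})" "f ` {..<n} \<noteq> {}" using i1 by auto
  obtain i0 where i0: "i0 < n" "f i0 = c"
    using Max_in[OF fin] unfolding c_def by auto
  have f_le: "f j \<le> c" if "j < n" for j unfolding c_def using fin that by auto
  have "0 < f i1" unfolding f_def using i1 pos by simp
  with f_le[OF i1(1)] have c: "0 < c" by linarith
  have v_le: "norm (v $ j) \<le> c * x $ j" if "j < n" for j
    using f_le[OF that] pos that unfolding f_def by (simp add: field_simps)
  have v_i0: "norm (v $ i0) = c * x $ i0"
    using i0 pos[rule_format, OF i0(1)] unfolding f_def by (simp add: field_simps)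
  have ev_row: "ev * v $ i0 = (\<Sum>j<n. complex_of_real (T $$ (i0, j)) * v $ j)"
    using arg_cong[OF v(3), of "\<lambda>w. w $ i0"] index_mult_mat_vec_sum[OF Tc v(1) i0(1)] T v(1) i0(1)
    by simp
  have "c * (norm ev * x $ i0) = norm (ev * v $ i0)"
    using v_i0 by (simp add: norm_mult)
  also have "\<dots> = norm (\<Sum>j<n. complex_of_real (T $$ (i0, j)) * v $ j)"
    unfolding ev_row ..
  also have "\<dots> \<le> (\<Sum>j<n. norm (complex_of_real (T $$ (i0, j)) * v $ j))"
    by (rule norm_sum)
  also have "\<dots> \<le> (\<Sum>j<n. T $$ (i0, j) * (c * x $ j))"
    using nonneg_matD[OF nn T i0(1)] v_le
    by (intro sum_mono) (simp add: norm_mult mult_left_mono)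
  also have "\<dots> = c * (T *\<^sub>v x) $ i0"
    using index_mult_mat_vec_sum[OF T x i0(1)] by (simp add: sum_distrib_left ac_simps)
  finally show thesis
    using that[OF i0(1)] c by simp
qed

lemma rho_less_if_mult_vec_less:
  fixes T :: "real mat"
  assumes T: "T \<in> carrier_mat n n" and n: "0 < n" and nn: "nonneg_mat T"
    and x: "x \<in> carrier_vec n" "\<forall>i<n. 0 < x $ i"
    and less: "\<forall>i<n. (T *\<^sub>v x) $ i < s * x $ i"
  shows "rho T < s"
proof -
  obtain ev where ev: "eigenvalue (map_mat complex_of_real T) ev" and rho: "rho T = norm ev"
    using rho_attained[OF T n] by blast
  obtain i where i: "i < n" "norm ev * x $ i \<le> (T *\<^sub>v x) $ i"
    using eigenvalue_norm_le_ratio[OF T nn x ev] by blast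
  with less have "norm ev * x $ i < s * x $ i" by force
  moreover have "0 < x $ i" using x(2) i(1) by blast
  ultimately show ?thesis
    unfolding rho by (simp add: mult_less_cancel_right)
qed

section \<open>Neumann series\<close>

lemma pow_entries_geometric_bound:
  fixes B :: "real mat"
  assumes B: "B \<in> carrier_mat n n" and n: "0 < n" and q: "rho B < q"
  obtains c where "\<And>K i j. i < n \<Longrightarrow> j < n \<Longrightarrow> \<bar>(B ^\<^sub>m K) $$ (i, j)\<bar> \<le> c * q ^ K"
proof -
  have q0: "0 < q" using rho_nonneg[OF B n] q by linarith
  define B' where "B' = (1 / q) \<cdot>\<^sub>m B"
  have B': "B' \<in> carrier_mat n n" unfolding B'_def using B by simp
  have "rho B' < 1" unfolding B'_def by (rule rho_smult_inverse_less_1[OF B n q])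
  then obtain c where c: "\<And>K. norm_bound (map_mat complex_of_real B' ^\<^sub>m K) c"
    using spectral_radius_jnf_norm_bound_less_1_upper_triangular[of "map_mat complex_of_real B'" n] B'
    unfolding rho_def by auto
  show thesis
  proof (rule that)
    fix K i j assume ij: "i < n" "j < n"
    have "norm_bound (map_mat complex_of_real (B' ^\<^sub>m K)) c"
      using c[of K] unfolding of_real_hom.mat_hom_pow[OF B', symmetric] .
    then have "\<bar>(B' ^\<^sub>m K) $$ (i, j)\<bar> \<le> c"
      using ij B' unfolding norm_bound_def by simp
    moreover have "(B' ^\<^sub>m K) $$ (i, j) = (B ^\<^sub>m K) $$ (i, j) / q ^ K"
      unfolding B'_def smult_pow_mat[OF B] using ij B by (simp add: power_one_over)
    ultimately show "\<bar>(B ^\<^sub>m K) $$ (i, j)\<bar> \<le> c * q ^ K"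
      using q0 by (simp add: pos_divide_le_eq)
  qed
qed

lemma nonneg_mat_add:
  assumes "A \<in> carrier_mat n m" "B \<in> carrier_mat n m" "nonneg_mat A" "nonneg_mat B"
  shows "nonneg_mat (A + B)"
  using assms unfolding nonneg_mat_def by auto

lemma fixpoint_unfold_nonneg:
  fixes C S P :: "real mat"
  assumes C: "C \<in> carrier_mat n n" and S: "S \<in> carrier_mat n n" "nonneg_mat S"
    and P: "P \<in> carrier_mat n n" "nonneg_mat P" and fixpoint: "C = S + P * C"
  shows "\<exists>S' \<in> carrier_mat n n. nonneg_mat S' \<and> C = S' + P ^\<^sub>m K * C"
proof (induction K)
  case 0
  have "C = 0\<^sub>m n n + P ^\<^sub>m 0 * C" using C P(1) by simp
  then show ?case by (intro bexI[of _ "0\<^sub>m n n"]) (auto simp: nonneg_mat_def)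
next
  case (Suc K)
  then obtain S' where S': "S' \<in> carrier_mat n n" "nonneg_mat S'" "C = S' + P ^\<^sub>m K * C"
    by blast
  have PK: "P ^\<^sub>m K \<in> carrier_mat n n" "nonneg_mat (P ^\<^sub>m K)"
    using nonneg_mat_pow[OF P] P(1) by auto
  have "P ^\<^sub>m K * C = P ^\<^sub>m K * (S + P * C)"
    using arg_cong[OF fixpoint, of "\<lambda>X. P ^\<^sub>m K * X"] .
  also have "\<dots> = P ^\<^sub>m K * S + P ^\<^sub>m Suc K * C"
    using PK(1) S(1) P(1) C by (simp add: mult_add_distrib_mat[of _ n n] assoc_mult_mat[of _ n n _ n])
  finally have "C = S' + (P ^\<^sub>m K * S + P ^\<^sub>m Suc K * C)"
    using S'(3) by simp
  also have "\<dots> = (S' + P ^\<^sub>m K * S) + P ^\<^sub>m Suc K * C"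
    by (rule assoc_add_mat[symmetric, of _ n n]) (use S'(1) PK(1) S(1) P(1) C in auto)
  moreover have "nonneg_mat (S' + P ^\<^sub>m K * S)"
    using S' S PK by (intro nonneg_mat_add[of _ n n] nonneg_mat_mult[of _ n n _ n]) auto
  ultimately show ?case using S'(1) PK(1) S(1) by (intro bexI[of _ "S' + P ^\<^sub>m K * S"]) auto
qed

text \<open>Unfolding \<open>C = S + P C\<close> gives \<open>C = (\<Sum>k<K. P\<^sup>k S) + P\<^sup>K C\<close>, and the last term
  vanishes as \<open>K \<rightarrow> \<infinity>\<close> because \<open>\<rho>(P) < 1\<close>.\<close>

lemma nonneg_mat_if_fixpoint:
  fixes C S P :: "real mat"
  assumes C: "C \<in> carrier_mat n n" and S: "S \<in> carrier_mat n n" "nonneg_mat S"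
    and P: "P \<in> carrier_mat n n" "nonneg_mat P" "rho P < 1" and n: "0 < n"
    and fixpoint: "C = S + P * C"
  shows "nonneg_mat C"
proof -
  obtain q where q: "rho P < q" "q < 1" using P(3) dense by blast
  have q0: "0 < q" using rho_nonneg[OF P(1) n] q(1) by linarith
  obtain c where c: "\<And>K i j. i < n \<Longrightarrow> j < n \<Longrightarrow> \<bar>(P ^\<^sub>m K) $$ (i, j)\<bar> \<le> c * q ^ K"
    using pow_entries_geometric_bound[OF P(1) n q(1)] by blast
  show ?thesis
    unfolding nonneg_mat_def
  proof (intro allI impI)
    fix i j assume "i < dim_row C" "j < dim_col C"
    with C have ij: "i < n" "j < n" by auto
    define D where "D = c * (\<Sum>l<n. \<bar>C $$ (l, j)\<bar>)"
    have lower: "- D * q ^ K \<le> C $$ (i, j)" for K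
    proof -
      obtain S' where S': "S' \<in> carrier_mat n n" "nonneg_mat S'" "C = S' + P ^\<^sub>m K * C"
        using fixpoint_unfold_nonneg[OF C S P(1,2) fixpoint] by blast
      have PK: "P ^\<^sub>m K \<in> carrier_mat n n" using P(1) by simp
      have "\<bar>(P ^\<^sub>m K * C) $$ (i, j)\<bar> \<le> (\<Sum>l<n. \<bar>(P ^\<^sub>m K) $$ (i, l) * C $$ (l, j)\<bar>)"
        unfolding index_mult_mat_sum[OF PK C ij] by (rule sum_abs)
      also have "\<dots> \<le> (\<Sum>l<n. c * q ^ K * \<bar>C $$ (l, j)\<bar>)"
        using c ij by (intro sum_mono) (simp add: abs_mult mult_right_mono)
      also have "\<dots> = D * q ^ K" unfolding D_def by (simp add: sum_distrib_left ac_simps)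
      finally have "- (D * q ^ K) \<le> (P ^\<^sub>m K * C) $$ (i, j)" by linarith
      moreover have "C $$ (i, j) = S' $$ (i, j) + (P ^\<^sub>m K * C) $$ (i, j)"
        using arg_cong[OF S'(3), of "\<lambda>X. X $$ (i, j)"] ij carrier_matD[OF mult_carrier_mat[OF PK C]]
        by simp
      ultimately show ?thesis using nonneg_matD[OF S'(2,1) ij] by linarith
    qed
    have "(\<lambda>K. - D * q ^ K) \<longlonglongrightarrow> 0"
      by (intro tendsto_mult_right_zero LIMSEQ_power_zero) (use q q0 in simp)
    then show "0 \<le> C $$ (i, j)"
      using lower by (intro LIMSEQ_le_const2) auto
  qed
qed

lemma neumann_inverse_nonneg:
  fixes B :: "real mat"
  assumes B: "B \<in> carrier_mat n n" "nonneg_mat B" and n: "0 < n" and t: "rho B < t"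
  obtains C where "C \<in> carrier_mat n n" "(t \<cdot>\<^sub>m 1\<^sub>m n - B) * C = 1\<^sub>m n"
    "C * (t \<cdot>\<^sub>m 1\<^sub>m n - B) = 1\<^sub>m n" "nonneg_mat C"
proof -
  define X where "X = t \<cdot>\<^sub>m 1\<^sub>m n - B"
  have X: "X \<in> carrier_mat n n" unfolding X_def by (rule minus_carrier_mat[OF B(1)])
  have t0: "0 < t" using rho_nonneg[OF B(1) n] t by linarith
  obtain C where C: "C \<in> carrier_mat n n" "C * X = 1\<^sub>m n" "X * C = 1\<^sub>m n"
    using det_non_zero_imp_unit[OF X det_shift_nonzero_if_rho_less[OF B(1) t, folded X_def], of undefined]
    unfolding Units_def by (auto simp: ring_mat_simps)
  define P where "P = (1 / t) \<cdot>\<^sub>m B"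
  have P: "P \<in> carrier_mat n n" "nonneg_mat P" "rho P < 1"
    using B t0 rho_smult_inverse_less_1[OF B(1) n t] unfolding P_def nonneg_mat_def by auto
  have XC: "t \<cdot>\<^sub>m C - B * C = 1\<^sub>m n"
    using C(3) B(1) C(1) unfolding X_def
    by (simp add: minus_mult_distrib_mat[of _ n n] mult_smult_assoc_mat[of _ n n])
  have fixpoint: "C = (1 / t) \<cdot>\<^sub>m 1\<^sub>m n + P * C"
  proof (rule eq_matI)
    fix i j assume "i < dim_row ((1 / t) \<cdot>\<^sub>m 1\<^sub>m n + P * C)" "j < dim_col ((1 / t) \<cdot>\<^sub>m 1\<^sub>m n + P * C)"
    then have ij: "i < n" "j < n" using C(1) P(1) by auto
    have "t * C $$ (i, j) - (B * C) $$ (i, j) = (1\<^sub>m n :: real mat) $$ (i, j)"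
      using arg_cong[OF XC, of "\<lambda>X. X $$ (i, j)"] ij B(1) C(1) by simp
    then show "C $$ (i, j) = ((1 / t) \<cdot>\<^sub>m 1\<^sub>m n + P * C) $$ (i, j)"
      using ij B(1) C(1) t0 unfolding P_def
      by (simp add: mult_smult_assoc_mat[of _ n n] field_simps)
  qed (use C(1) P(1) in auto)
  have "nonneg_mat ((1 / t) \<cdot>\<^sub>m 1\<^sub>m n)" using t0 unfolding nonneg_mat_def by simp
  then have "nonneg_mat C"
    using nonneg_mat_if_fixpoint[OF C(1) _ _ P n fixpoint] by simp
  with C that show thesis unfolding X_def by blast
qed

section \<open>Inverses of M-matrices\<close>

lemma minv_inverse:
  assumes A: "A \<in> carrier_mat n n" and inv: "invertible_mat A"
  shows "minv A \<in> carrier_mat n n" "A * minv A = 1\<^sub>m n" "minv A * A = 1\<^sub>m n"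
proof -
  obtain B where AB: "A * B = 1\<^sub>m (dim_row A)" "B * A = 1\<^sub>m (dim_row B)"
    using inv unfolding invertible_mat_def inverts_mat_def by blast
  have "B \<in> carrier_mat n n"
    using arg_cong[OF AB(1), of dim_col] arg_cong[OF AB(2), of dim_col] A by auto
  then have "A \<in> Units (ring_mat TYPE(real) n undefined)"
    using A AB unfolding Units_def by (auto simp: ring_mat_simps)
  then obtain C where "mat_inverse A = Some C"
    using mat_inverse(1)[OF A] by fastforce
  with mat_inverse(2)[OF A this] show
    "minv A \<in> carrier_mat n n" "A * minv A = 1\<^sub>m n" "minv A * A = 1\<^sub>m n"
    unfolding minv_def by auto
qed

lemma abs_index_mult_le_row_sum:
  fixes R C :: "real mat"
  assumes R: "R \<in> carrier_mat n n" "nonneg_mat R" and C: "C \<in> carrier_mat n n"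
    and M: "\<And>l b. l < n \<Longrightarrow> b < n \<Longrightarrow> \<bar>C $$ (l, b)\<bar> \<le> M" and ab: "a < n" "b < n"
  shows "\<bar>(R * C) $$ (a, b)\<bar> \<le> M * (\<Sum>l<n. R $$ (a, l))"
proof -
  have "\<bar>(R * C) $$ (a, b)\<bar> \<le> (\<Sum>l<n. \<bar>R $$ (a, l) * C $$ (l, b)\<bar>)"
    unfolding index_mult_mat_sum[OF R(1) C ab] by (rule sum_abs)
  also have "\<dots> \<le> (\<Sum>l<n. R $$ (a, l) * M)"
    using nonneg_matD[OF R(2,1) ab(1)] M ab(2) by (intro sum_mono) (simp add: abs_mult mult_left_mono)
  finally show ?thesis by (simp add: sum_distrib_left mult.commute)
qed

lemma perturbed_inverse_row_sum_le:
  fixes R C :: "real mat"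
  assumes R: "R \<in> carrier_mat n n" "nonneg_mat R" and C: "C \<in> carrier_mat n n"
    and M: "\<And>a b. a < n \<Longrightarrow> b < n \<Longrightarrow> \<bar>C $$ (a, b)\<bar> \<le> M"
    and CR: "C = R + \<epsilon> \<cdot>\<^sub>m (R * C)" and \<epsilon>: "0 \<le> \<epsilon>" "\<epsilon> * (2 * n * M) \<le> 1" and i: "i < n"
  shows "(\<Sum>l<n. R $$ (i, l)) \<le> 2 * n * M"
proof -
  define rs where "rs = (\<Sum>l<n. R $$ (i, l))"
  have rs0: "0 \<le> rs" unfolding rs_def using nonneg_matD[OF R(2,1) i] by (auto intro: sum_nonneg)
  have R_entry: "R $$ (i, l) \<le> M + \<epsilon> * (M * rs)" if l: "l < n" for l
  proof -
    have "C $$ (i, l) = R $$ (i, l) + \<epsilon> * (R * C) $$ (i, l)"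
      using arg_cong[OF CR, of "\<lambda>X. X $$ (i, l)"] i l R(1) C by simp
    moreover have "\<epsilon> * (- (R * C) $$ (i, l)) \<le> \<epsilon> * (M * rs)"
      using abs_index_mult_le_row_sum[OF R C M i l, folded rs_def]
        abs_ge_minus_self[of "(R * C) $$ (i, l)"] \<epsilon>(1)
      by (intro mult_left_mono) auto
    ultimately show ?thesis using M[OF i l] by (simp add: abs_le_iff algebra_simps)
  qed
  have "(\<Sum>l<n. R $$ (i, l)) \<le> (\<Sum>l<n. M + \<epsilon> * (M * rs))"
    using R_entry by (intro sum_mono) simp
  then have "rs \<le> n * (M + \<epsilon> * (M * rs))" unfolding rs_def[symmetric] by simp
  moreover have "(\<epsilon> * (2 * n * M)) * rs \<le> 1 * rs"
    using \<epsilon>(2) rs0 by (rule mult_right_mono)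
  ultimately show ?thesis unfolding rs_def[symmetric] by (simp add: algebra_simps)
qed

text \<open>Continuity of the inverse, made quantitative: \<open>C = R + \<epsilon> R C\<close> keeps the row sums of
  \<open>R\<close> bounded as \<open>\<epsilon> \<rightarrow> 0\<close>, so \<open>C\<close> is an entrywise limit of nonnegative matrices.\<close>

lemma nonneg_mat_if_perturbed_inverses_nonneg:
  fixes C :: "real mat"
  assumes C: "C \<in> carrier_mat n n"
    and approx: "\<And>\<epsilon>. 0 < \<epsilon> \<Longrightarrow> \<exists>R \<in> carrier_mat n n. nonneg_mat R \<and> C = R + \<epsilon> \<cdot>\<^sub>m (R * C)"
  shows "nonneg_mat C"
  unfolding nonneg_mat_def
proof (intro allI impI)
  fix i j assume "i < dim_row C" "j < dim_col C"
  with C have ij: "i < n" "j < n" by auto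
  define M where "M = 1 + (\<Sum>a<n. \<Sum>b<n. \<bar>C $$ (a, b)\<bar>)"
  have M: "\<bar>C $$ (a, b)\<bar> \<le> M" if "a < n" "b < n" for a b
  proof -
    have "\<bar>C $$ (a, b)\<bar> \<le> (\<Sum>b<n. \<bar>C $$ (a, b)\<bar>)"
      using that by (intro member_le_sum) auto
    also have "\<dots> \<le> (\<Sum>a<n. \<Sum>b<n. \<bar>C $$ (a, b)\<bar>)"
      using that by (intro member_le_sum[of a _ "\<lambda>a. \<Sum>b<n. \<bar>C $$ (a, b)\<bar>"]) (auto intro: sum_nonneg)
    finally show ?thesis unfolding M_def by linarith
  qed
  have M0: "0 < M" unfolding M_def by (simp add: add_pos_nonneg sum_nonneg)
  show "0 \<le> C $$ (i, j)"
  proof (rule field_le_epsilon)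
    fix e :: real assume e: "0 < e"
    define \<epsilon> where "\<epsilon> = min (1 / (2 * n * M)) (e / (2 * n * M\<^sup>2))"
    have pos: "0 < 2 * n * M" "0 < 2 * n * M\<^sup>2" using ij M0 by auto
    with e have \<epsilon>: "0 < \<epsilon>" unfolding \<epsilon>_def by simp
    have "\<epsilon> \<le> 1 / (2 * n * M)" "\<epsilon> \<le> e / (2 * n * M\<^sup>2)" unfolding \<epsilon>_def by auto
    with pos have \<epsilon>_small: "\<epsilon> * (2 * n * M) \<le> 1" "\<epsilon> * (2 * n * M\<^sup>2) \<le> e"
      by (simp_all add: pos_le_divide_eq)
    obtain R where R: "R \<in> carrier_mat n n" "nonneg_mat R" and CR: "C = R + \<epsilon> \<cdot>\<^sub>m (R * C)"
      using approx[OF \<epsilon>] by blast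
    define rs where "rs = (\<Sum>l<n. R $$ (i, l))"
    have "rs \<le> 2 * n * M"
      unfolding rs_def using perturbed_inverse_row_sum_le[OF R C M CR _ \<epsilon>_small(1) ij(1)] \<epsilon> by simp
    then have "\<epsilon> * (M * rs) \<le> \<epsilon> * (2 * n * M\<^sup>2)"
      using M0 \<epsilon> by (simp add: power2_eq_square mult_left_mono)
    moreover have "- (\<epsilon> * (M * rs)) \<le> \<epsilon> * (R * C) $$ (i, j)"
      using abs_index_mult_le_row_sum[OF R C M ij, folded rs_def] \<epsilon>
      by (simp add: abs_le_iff mult_left_mono flip: mult_minus_right)
    moreover have "C $$ (i, j) = R $$ (i, j) + \<epsilon> * (R * C) $$ (i, j)"
      using arg_cong[OF CR, of "\<lambda>X. X $$ (i, j)"] ij R(1) C by simp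
    ultimately show "0 \<le> C $$ (i, j) + e"
      using nonneg_matD[OF R(2,1) ij] \<epsilon>_small(2) by linarith
  qed
qed

lemma inv_M_matrix_minv:
  assumes "inv_M_matrix n A"
  shows "minv A \<in> carrier_mat n n" "A * minv A = 1\<^sub>m n" "minv A * A = 1\<^sub>m n"
    "nonneg_mat (minv A)"
proof -
  obtain s B where A: "A \<in> carrier_mat n n" "invertible_mat A"
    and B: "B \<in> carrier_mat n n" "nonneg_mat B" "rho B \<le> s" and AB: "A = s \<cdot>\<^sub>m 1\<^sub>m n - B"
    using assms unfolding inv_M_matrix_def M_matrix_def by blast
  note C = minv_inverse[OF A]
  show "minv A \<in> carrier_mat n n" "A * minv A = 1\<^sub>m n" "minv A * A = 1\<^sub>m n" by (fact C)+
  show "nonneg_mat (minv A)"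
  proof (cases "n = 0")
    case True
    with C(1) show ?thesis unfolding nonneg_mat_def by simp
  next
    case False
    show ?thesis
    proof (rule nonneg_mat_if_perturbed_inverses_nonneg[OF C(1)])
      fix \<epsilon> :: real assume \<epsilon>: "0 < \<epsilon>"
      obtain R where R: "R \<in> carrier_mat n n" "nonneg_mat R"
        and R_inv: "R * ((s + \<epsilon>) \<cdot>\<^sub>m 1\<^sub>m n - B) = 1\<^sub>m n"
        using neumann_inverse_nonneg[OF B(1,2), of "s + \<epsilon>"] False B(3) \<epsilon> by auto
      have "(s + \<epsilon>) \<cdot>\<^sub>m 1\<^sub>m n - B = A + \<epsilon> \<cdot>\<^sub>m 1\<^sub>m n"
        unfolding AB using B(1) by (intro eq_matI) auto
      with R_inv have "R * A + \<epsilon> \<cdot>\<^sub>m R = 1\<^sub>m n"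
        using R(1) A(1) mult_smult_distrib[OF R(1) one_carrier_mat, of \<epsilon>]
        by (simp add: mult_add_distrib_mat[of _ n n])
      then have "minv A = (R * A + \<epsilon> \<cdot>\<^sub>m R) * minv A" using C(1) by simp
      also have "\<dots> = R + \<epsilon> \<cdot>\<^sub>m (R * minv A)"
        using R(1) A(1) C by (simp add: add_mult_distrib_mat[of _ n n] mult_smult_assoc_mat[of _ n n]
            assoc_mult_mat[of _ n n _ n])
      finally show "\<exists>R \<in> carrier_mat n n. nonneg_mat R \<and> minv A = R + \<epsilon> \<cdot>\<^sub>m (R * minv A)"
        using R by blast
    qed
  qed
qed

section \<open>Regular splittings\<close>

lemma regular_splittingD:
  assumes "regular_splitting n A P Q"
  shows "P \<in> carrier_mat n n" "Q \<in> carrier_mat n n" "nonneg_mat Q" "A = P - Q"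
    "minv P \<in> carrier_mat n n" "P * minv P = 1\<^sub>m n" "minv P * P = 1\<^sub>m n" "nonneg_mat (minv P)"
    "minv P * Q \<in> carrier_mat n n" "nonneg_mat (minv P * Q)"
proof -
  have P: "inv_M_matrix n P" "P \<in> carrier_mat n n"
    using assms unfolding regular_splitting_def inv_M_matrix_def M_matrix_def by auto
  show "P \<in> carrier_mat n n" "Q \<in> carrier_mat n n" "nonneg_mat Q" "A = P - Q"
    using assms P unfolding regular_splitting_def by auto
  show "minv P \<in> carrier_mat n n" "P * minv P = 1\<^sub>m n" "minv P * P = 1\<^sub>m n" "nonneg_mat (minv P)"
    using inv_M_matrix_minv[OF P(1)] by auto
  then show "minv P * Q \<in> carrier_mat n n" "nonneg_mat (minv P * Q)"
    using assms nonneg_mat_mult[of "minv P" n n Q n] unfolding regular_splitting_def by auto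
qed

text \<open>With \<open>x = e + A\<^sup>-\<^sup>1 Q e\<close> one has \<open>A x = P e\<close>, hence \<open>P\<^sup>-\<^sup>1 Q x = x - e\<close>.\<close>

lemma regular_splitting_rho_less_1:
  assumes A: "inv_M_matrix n A" and S: "regular_splitting n A P Q" and n: "0 < n"
  shows "rho (minv P * Q) < 1"
proof -
  note S = regular_splittingD[OF S] and Ainv = inv_M_matrix_minv[OF A]
  have Ac: "A \<in> carrier_mat n n" unfolding S(4) by (rule minus_carrier_mat[OF S(2)])
  define e where "e = vec n (\<lambda>_. 1 :: real)"
  have e: "e \<in> carrier_vec n" unfolding e_def by simp
  define y where "y = minv A *\<^sub>v (Q *\<^sub>v e)"
  have Qe: "\<forall>i<n. 0 \<le> (Q *\<^sub>v e) $ i"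
    by (intro allI impI nonneg_mat_mult_vec[OF S(2,3) e]) (simp_all add: e_def)
  have y: "y \<in> carrier_vec n" "\<forall>i<n. 0 \<le> y $ i"
    unfolding y_def using Ainv(1) S(2) e
    by (simp, intro allI impI nonneg_mat_mult_vec[OF Ainv(1,4) _ Qe]) simp_all
  define x where "x = e + y"
  have x: "x \<in> carrier_vec n" "\<forall>i<n. 0 < x $ i"
    unfolding x_def using e y by (auto simp: e_def add_pos_nonneg)
  have "A *\<^sub>v y = Q *\<^sub>v e"
    unfolding y_def by (rule inverse_mult_mat_vec_cancel[OF Ac Ainv(1,2)]) (use S(2) e in simp)
  then have "A *\<^sub>v x = (A + Q) *\<^sub>v e"
    unfolding x_def using Ac S(2) e y(1) by (simp add: mult_add_distrib_mat_vec add_mult_distrib_mat_vec)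
  also have "A + Q = P" unfolding S(4) using S(1,2) by (intro eq_matI) auto
  finally have Ax: "A *\<^sub>v x = P *\<^sub>v e" .
  have "Q = P - A" unfolding S(4) using S(1,2) by (intro eq_matI) auto
  then have "Q *\<^sub>v x = P *\<^sub>v (x - e)"
    using S(1) Ac x(1) e Ax by (simp add: minus_mult_distrib_mat_vec mult_minus_distrib_mat_vec)
  then have Tx: "(minv P * Q) *\<^sub>v x = x - e"
    using inverse_mult_mat_vec_cancel[OF S(5,1,7), of "x - e"] S(2,5) x(1) e by simp
  show ?thesis
    by (rule rho_less_if_mult_vec_less[OF S(9) n S(10) x]) (use Tx x(1) e in \<open>simp add: e_def\<close>)
qed

lemma regular_splitting_shifted_solution:
  assumes S: "regular_splitting n A P Q" and n: "0 < n" and \<mu>: "rho (minv P * Q) < \<mu>"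
    and b: "b \<in> carrier_vec n" "\<forall>i<n. 0 \<le> b $ i"
  obtains x where "x \<in> carrier_vec n" "\<forall>i<n. 0 \<le> x $ i" "(\<mu> \<cdot>\<^sub>m P - Q) *\<^sub>v x = b"
proof -
  note S = regular_splittingD[OF S]
  define X where "X = \<mu> \<cdot>\<^sub>m 1\<^sub>m n - minv P * Q"
  have X: "X \<in> carrier_mat n n" unfolding X_def by (rule minus_carrier_mat[OF S(9)])
  obtain R where R: "R \<in> carrier_mat n n" "X * R = 1\<^sub>m n" "nonneg_mat R"
    using neumann_inverse_nonneg[OF S(9,10) n \<mu>] unfolding X_def by blast
  have PX: "\<mu> \<cdot>\<^sub>m P - Q = P * X"
  proof -
    have "P * X = P * (\<mu> \<cdot>\<^sub>m 1\<^sub>m n) - P * (minv P * Q)"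
      unfolding X_def by (rule mult_minus_distrib_mat[OF S(1) _ S(9)]) simp
    also have "P * (\<mu> \<cdot>\<^sub>m 1\<^sub>m n) = \<mu> \<cdot>\<^sub>m P"
      using mult_smult_distrib[OF S(1) one_carrier_mat, of \<mu>] S(1) by simp
    also have "P * (minv P * Q) = Q"
      using assoc_mult_mat[OF S(1,5,2)] S(2,6) by simp
    finally show ?thesis by (rule sym)
  qed
  define x where "x = R *\<^sub>v (minv P *\<^sub>v b)"
  show thesis
  proof (rule that)
    show "x \<in> carrier_vec n" unfolding x_def using R(1) S(5) b(1) by simp
    have "\<forall>j<n. 0 \<le> (minv P *\<^sub>v b) $ j"
      by (intro allI impI nonneg_mat_mult_vec[OF S(5,8) b])
    then show "\<forall>i<n. 0 \<le> x $ i"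
      unfolding x_def using S(5) b(1) by (auto intro!: nonneg_mat_mult_vec[OF R(1,3)])
    have "(\<mu> \<cdot>\<^sub>m P - Q) *\<^sub>v x = P *\<^sub>v (X *\<^sub>v (R *\<^sub>v (minv P *\<^sub>v b)))"
      unfolding PX x_def using S(1,5) X R(1) b(1) by simp
    also have "X *\<^sub>v (R *\<^sub>v (minv P *\<^sub>v b)) = minv P *\<^sub>v b"
      by (rule inverse_mult_mat_vec_cancel[OF X R(1,2)]) (use S(5) b(1) in simp)
    also have "P *\<^sub>v (minv P *\<^sub>v b) = b"
      by (rule inverse_mult_mat_vec_cancel[OF S(1,5,6) b(1)])
    finally show "(\<mu> \<cdot>\<^sub>m P - Q) *\<^sub>v x = b" .
  qed
qed

lemma regular_splitting_rho_less_if_test_vector: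
  assumes S: "regular_splitting n A P Q" and n: "0 < n"
    and z: "z \<in> carrier_vec n" "\<forall>i<n. 0 \<le> z $ i"
    and pos: "\<forall>i<n. 0 < ((\<mu> \<cdot>\<^sub>m P - Q) *\<^sub>v z) $ i"
  shows "rho (minv P * Q) < \<mu>"
proof -
  note S = regular_splittingD[OF S]
  define w where "w = (\<mu> \<cdot>\<^sub>m P - Q) *\<^sub>v z"
  have w: "w \<in> carrier_vec n"
    unfolding w_def using mult_mat_vec_carrier[OF minus_carrier_mat[OF S(2)] z(1)] .
  have "w = \<mu> \<cdot>\<^sub>v (P *\<^sub>v z) - Q *\<^sub>v z"
    unfolding w_def using minus_mult_distrib_mat_vec[OF smult_carrier_mat[OF S(1)] S(2) z(1)]
      smult_mat_mult_vec[OF S(1) z(1)] by simp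
  then have "minv P *\<^sub>v w = \<mu> \<cdot>\<^sub>v (minv P *\<^sub>v (P *\<^sub>v z)) - minv P *\<^sub>v (Q *\<^sub>v z)"
    using mult_minus_distrib_mat_vec[OF S(5), of "\<mu> \<cdot>\<^sub>v (P *\<^sub>v z)" "Q *\<^sub>v z"]
      mult_mat_vec[OF S(5), of "P *\<^sub>v z" \<mu>] S(1,2) z(1) by simp
  then have Pw: "minv P *\<^sub>v w = \<mu> \<cdot>\<^sub>v z - (minv P * Q) *\<^sub>v z"
    using inverse_mult_mat_vec_cancel[OF S(5,1,7) z(1)] S(2,5) z(1) by simp
  have less: "((minv P * Q) *\<^sub>v z) $ i < \<mu> * z $ i" if i: "i < n" for i
    using nonneg_mat_right_inverse_mult_vec_pos[OF S(5,1,8,7) w pos[folded w_def] i] Pw i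
      carrier_vecD[OF z(1)] carrier_vecD[OF mult_mat_vec_carrier[OF S(9) z(1)]]
    by simp
  have "0 < z $ i" if i: "i < n" for i
  proof -
    have "0 < \<mu> * z $ i"
      using less[OF i] nonneg_mat_mult_vec[OF S(9,10) z i] by linarith
    with z(2) i show ?thesis by (metis less_eq_real_def mult_zero_right)
  qed
  with less show ?thesis using rho_less_if_mult_vec_less[OF S(9) n S(10) z(1)] by blast
qed

lemma mult_vec_scaled_ge:
  fixes W W' :: "real mat"
  assumes W: "W \<in> carrier_mat n n" and W': "W' \<in> carrier_mat n n"
    and x: "x \<in> carrier_vec n" "\<forall>j<n. 0 \<le> x $ j"
    and scaled: "\<forall>i<n. \<forall>j<n. d i * W' $$ (i, j) \<le> W $$ (i, j) * d j" and i: "i < n"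
  shows "d i * (W' *\<^sub>v x) $ i \<le> (W *\<^sub>v vec n (\<lambda>j. d j * x $ j)) $ i"
proof -
  have "d i * (W' *\<^sub>v x) $ i = (\<Sum>j<n. d i * W' $$ (i, j) * x $ j)"
    unfolding index_mult_mat_vec_sum[OF W' x(1) i] by (simp add: sum_distrib_left mult.assoc)
  also have "\<dots> \<le> (\<Sum>j<n. W $$ (i, j) * d j * x $ j)"
    using scaled i x(2) by (intro sum_mono mult_right_mono) auto
  also have "\<dots> = (W *\<^sub>v vec n (\<lambda>j. d j * x $ j)) $ i"
    using index_mult_mat_vec_sum[OF W _ i, of "vec n (\<lambda>j. d j * x $ j)"] by (simp add: mult.assoc)
  finally show ?thesis .
qed

section \<open>Comparison of regular splittings\<close>

lemma regular_splittings_rho_le_if_scaled_dominance: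
  assumes A: "inv_M_matrix n A"
    and S: "regular_splitting n A P Q" and S': "regular_splitting n A P' Q'"
    and scaling: "\<And>\<mu>. 0 < \<mu> \<Longrightarrow> rho (minv P' * Q') < \<mu> \<Longrightarrow> \<mu> < 1 \<Longrightarrow> \<exists>d. (\<forall>j. 0 < d j) \<and>
      (\<forall>i<n. \<forall>j<n. d i * (\<mu> \<cdot>\<^sub>m P' - Q') $$ (i, j) \<le> (\<mu> \<cdot>\<^sub>m P - Q) $$ (i, j) * d j)"
  shows "rho (minv P * Q) \<le> rho (minv P' * Q')"
proof (cases "n = 0")
  case True
  have "minv P * Q = minv P' * Q'"
    using regular_splittingD(9)[OF S] regular_splittingD(9)[OF S'] True
    by (intro eq_matI) (auto simp del: index_mult_mat)
  then show ?thesis by simp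
next
  case False
  then have n: "0 < n" by simp
  note SD = regular_splittingD[OF S] and S'D = regular_splittingD[OF S']
  show ?thesis
  proof (rule dense_ge_bounded[OF regular_splitting_rho_less_1[OF A S' n]])
    fix \<mu> assume \<mu>: "rho (minv P' * Q') < \<mu>" "\<mu> < 1"
    have "0 < \<mu>" using rho_nonneg[OF S'D(9) n] \<mu>(1) by linarith
    with scaling \<mu> obtain d where d: "\<forall>j. 0 < d j"
      and dom: "\<forall>i<n. \<forall>j<n. d i * (\<mu> \<cdot>\<^sub>m P' - Q') $$ (i, j) \<le> (\<mu> \<cdot>\<^sub>m P - Q) $$ (i, j) * d j"
      by blast
    obtain x where x: "x \<in> carrier_vec n" "\<forall>i<n. 0 \<le> x $ i"
      and Wx: "(\<mu> \<cdot>\<^sub>m P' - Q') *\<^sub>v x = vec n (\<lambda>_. 1)"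
      using regular_splitting_shifted_solution[OF S' n \<mu>(1), of "vec n (\<lambda>_. 1)"] by auto
    define z where "z = vec n (\<lambda>j. d j * x $ j)"
    have z: "z \<in> carrier_vec n" "\<forall>i<n. 0 \<le> z $ i"
      unfolding z_def using d x(2) by (auto intro: mult_nonneg_nonneg less_imp_le)
    have "0 < ((\<mu> \<cdot>\<^sub>m P - Q) *\<^sub>v z) $ i" if i: "i < n" for i
    proof -
      have "d i * ((\<mu> \<cdot>\<^sub>m P' - Q') *\<^sub>v x) $ i \<le> ((\<mu> \<cdot>\<^sub>m P - Q) *\<^sub>v z) $ i"
        unfolding z_def
        by (rule mult_vec_scaled_ge[OF minus_carrier_mat[OF SD(2)] minus_carrier_mat[OF S'D(2)] x dom i])
      with Wx d i show ?thesis by (metis index_vec mult.right_neutral order_less_le_trans)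
    qed
    with regular_splitting_rho_less_if_test_vector[OF S n z] show "rho (minv P * Q) \<le> \<mu>"
      by (simp add: less_imp_le)
  qed
qed

text \<open>The only slack is \<open>(\<mu>\<^sup>-\<^sup>1 - 1) N\<^sub>2\<^sub>1 \<ge> 0\<close>, in the lower left block.\<close>

lemma block_triangular_splittings_scaled_dominance:
  fixes \<mu> :: real
  assumes carrier: "M11 \<in> carrier_mat k k" "N11 \<in> carrier_mat k k"
    "M22 \<in> carrier_mat l l" "N22 \<in> carrier_mat l l" "M21 \<in> carrier_mat l k" "N21 \<in> carrier_mat l k"
    "A12 \<in> carrier_mat k l" "A21 \<in> carrier_mat l k"
    and A21: "A21 = M21 - N21" and N21: "nonneg_mat N21" and \<mu>: "0 < \<mu>" "\<mu> \<le> 1"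
    and ij: "i < k + l" "j < k + l"
  defines "d \<equiv> \<lambda>i. if i < k then 1 else 1 / \<mu>"
  shows "d i * (\<mu> \<cdot>\<^sub>m four_block_mat M11 (0\<^sub>m k l) M21 M22 - four_block_mat N11 (- A12) N21 N22) $$ (i, j)
    \<le> (\<mu> \<cdot>\<^sub>m four_block_mat M11 A12 (0\<^sub>m l k) M22 - four_block_mat N11 (0\<^sub>m k l) (- A21) N22) $$ (i, j) * d j"
proof -
  consider "i < k" | "k \<le> i" "j < k" | "k \<le> i" "k \<le> j" by linarith
  then show ?thesis
  proof cases
    case 2
    have "0 \<le> N21 $$ (i - k, j)"
      by (intro nonneg_matD[OF N21 carrier(6)]) (use 2 ij in auto)
    then have "N21 $$ (i - k, j) \<le> N21 $$ (i - k, j) / \<mu>"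
      using \<mu> by (simp add: le_divide_eq mult_left_le)
    then show ?thesis using 2 ij carrier \<mu> unfolding d_def A21 by (simp add: field_simps)
  qed (use ij carrier \<mu> in \<open>auto simp: d_def field_simps\<close>)
qed

theorem corollary3:
  fixes k l :: nat
    and A A11 A12 A21 A22 M11 N11 M22 N22 M21 N21 :: "real mat"
  assumes "inv_M_matrix (k + l) A"
    and "A11 \<in> carrier_mat k k" and "A12 \<in> carrier_mat k l"
    and "A21 \<in> carrier_mat l k" and "A22 \<in> carrier_mat l l"
    and "A = four_block_mat A11 A12 A21 A22"
    and "M11 \<in> carrier_mat k k" and "N11 \<in> carrier_mat k k"
    and "M22 \<in> carrier_mat l l" and "N22 \<in> carrier_mat l l"
    and "M21 \<in> carrier_mat l k" and "N21 \<in> carrier_mat l k"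
    and "regular_splitting (k + l) A
           (four_block_mat M11 (0\<^sub>m k l) M21 M22)
           (four_block_mat N11 (- A12) N21 N22)"
    and "regular_splitting (k + l) A
           (four_block_mat M11 A12 (0\<^sub>m l k) M22)
           (four_block_mat N11 (0\<^sub>m k l) (- A21) N22)"
  shows "rho (minv (four_block_mat M11 A12 (0\<^sub>m l k) M22) * four_block_mat N11 (0\<^sub>m k l) (- A21) N22)
         \<le> rho (minv (four_block_mat M11 (0\<^sub>m k l) M21 M22) * four_block_mat N11 (- A12) N21 N22)"
proof (rule regular_splittings_rho_le_if_scaled_dominance[OF assms(1,14,13)])
  note carrier = assms(2-5,7-12)
  note S' = regular_splittingD[OF assms(13)]
  have A21: "A21 = M21 - N21"
  proof (rule eq_matI)
    fix i j assume "i < dim_row (M21 - N21)" "j < dim_col (M21 - N21)"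
    then show "A21 $$ (i, j) = (M21 - N21) $$ (i, j)"
      using arg_cong[OF S'(4), of "\<lambda>X. X $$ (k + i, j)"] assms(6) carrier by simp
  qed (use carrier in auto)
  have N21: "nonneg_mat N21"
    unfolding nonneg_mat_def
  proof (intro allI impI)
    fix i j assume "i < dim_row N21" "j < dim_col N21"
    then show "0 \<le> N21 $$ (i, j)"
      using nonneg_matD[OF S'(3,2), of "k + i" j] carrier by simp
  qed
  fix \<mu> :: real assume "0 < \<mu>" "\<mu> < 1"
  then show "\<exists>d. (\<forall>j. 0 < d j) \<and> (\<forall>i<k + l. \<forall>j<k + l.
      d i * (\<mu> \<cdot>\<^sub>m four_block_mat M11 (0\<^sub>m k l) M21 M22 - four_block_mat N11 (- A12) N21 N22) $$ (i, j)
      \<le> (\<mu> \<cdot>\<^sub>m four_block_mat M11 A12 (0\<^sub>m l k) M22 - four_block_mat N11 (0\<^sub>m k l) (- A21) N22) $$ (i, j) * d j)"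
    using block_triangular_splittings_scaled_dominance[OF carrier(5-10,2,3) A21 N21]
    by (intro exI[of _ "\<lambda>i. if i < k then 1 else 1 / \<mu>"]) auto
qed

end
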